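(* Let $L$ be a $\phi$-subfield of $\mathbf{K}'$ containing $\mathbf{K}$ (i.e. a subfield with $\mathbf{K}\subset L\subset\mathbf{K}'$ and $\phi(L)=L$). Then there exists an integer $k\geq0$ such that $L=\mathbf{K}(\log(z)^k)$.
   Context: $p\geq2$ integer. $\mathbf{K}=\bigcup_{j\geq1}\mathbb{C}(z^{1/j})$ with automorphism $\phi(f(z))=f(z^p)$; $\mathbf{K}'=\mathbf{K}(\log z)$ ($\log z$ transcendental over $\mathbf{K}$) with automorphism $\phi(f(z,\log z))=f(z^p,p\log z)$. *)

theory Defs
  imports "HOL-Analysis.Analysis"
begin

text \<open>Elements of K and K' are modelled concretely as germs at +infinity of
  functions of a positive real variable z (so z^(1/j) and log z are the usual
  real-analytic branches).  A germ is represented by any function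
  real => complex; two functions represent the same element iff they agree
  eventually at top.  All sets of elements below are saturated under this
  equivalence.\<close>

definition germ_eq :: "(real \<Rightarrow> complex) \<Rightarrow> (real \<Rightarrow> complex) \<Rightarrow> bool" where
  "germ_eq f g \<longleftrightarrow> (\<forall>\<^sub>F x in at_top. f x = g x)"

definition Kj :: "nat \<Rightarrow> (real \<Rightarrow> complex) set" where
  "Kj j = {f. \<exists>P Q :: complex poly. germ_eq f
     (\<lambda>x. poly P (complex_of_real (x powr (1 / real j))) /
          poly Q (complex_of_real (x powr (1 / real j))))}"

definition KK :: "(real \<Rightarrow> complex) set" where
  "KK = (\<Union>j\<in>{1..}. Kj j)"

definition logfn :: "real \<Rightarrow> complex" where
  "logfn x = complex_of_real (ln x)"

definition adjoin :: "(real \<Rightarrow> complex) set \<Rightarrow> (real \<Rightarrow> complex) \<Rightarrow> (real \<Rightarrow> complex) set" where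
  "adjoin S t = {f. \<exists>(a :: nat \<Rightarrow> real \<Rightarrow> complex) b n. (\<forall>i. a i \<in> S \<and> b i \<in> S) \<and>
     germ_eq f (\<lambda>x. (\<Sum>i<n. a i x * t x ^ i) / (\<Sum>i<n. b i x * t x ^ i))}"

definition KK' :: "(real \<Rightarrow> complex) set" where
  "KK' = adjoin KK logfn"

text \<open>The automorphism phi: f(z) |-> f(z^p) (on K' this is f(z, log z) |-> f(z^p, p log z)).\<close>
definition phi :: "nat \<Rightarrow> (real \<Rightarrow> complex) \<Rightarrow> (real \<Rightarrow> complex)" where
  "phi p f = (\<lambda>x. f (x ^ p))"

definition germ_subfield :: "(real \<Rightarrow> complex) set \<Rightarrow> bool" where
  "germ_subfield L \<longleftrightarrow>
     (\<forall>f g. f \<in> L \<longrightarrow> germ_eq f g \<longrightarrow> g \<in> L) \<and>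
     (\<lambda>_. 0) \<in> L \<and> (\<lambda>_. 1) \<in> L \<and>
     (\<forall>f\<in>L. \<forall>g\<in>L. (\<lambda>x. f x + g x) \<in> L \<and> (\<lambda>x. f x * g x) \<in> L) \<and>
     (\<forall>f\<in>L. (\<lambda>x. - f x) \<in> L \<and> (\<lambda>x. inverse (f x)) \<in> L)"

end

theory Submission
  imports Defs "HOL-Real_Asymp.Real_Asymp"
begin

text \<open>
  Every nonzero element of K' = K(log z) has a leading term c z^r (log z)^s at infinity, with
  c \<noteq> 0. Consequently nonzero elements of L are eventually nonzero, and an element of K' fixed
  by phi is constant: phi sends the leading exponents (r, s) to (p r, s) and multiplies c by p^s.

  If log z satisfies no algebraic relation over L, writing f \<in> L as A / B with A, B polynomials
  in log z over K and comparing coefficients in f B = A shows that f \<in> K. Otherwise let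
  X^n + \<mu>_(n-1) X^(n-1) + ... + \<mu>_0 be the monic relation of least degree. Since log(z^p) = p log z,
  applying phi and rescaling yields another monic relation of degree n, which must coincide with
  the first; hence every \<mu>_i / (log z)^(n-i) is fixed by phi, so \<mu>_i = c_i (log z)^(n-i) with
  constants c_i. Some c_i is nonzero, so (log z)^(n-i) \<in> L, and minimality of n forces i = 0,
  i.e. (log z)^n \<in> L. Grouping the exponents of A and B by their residues modulo n and comparing
  coefficients once more gives L = K((log z)^n).
\<close>

abbreviation germ_zero :: "(real \<Rightarrow> complex) \<Rightarrow> bool" where
  "germ_zero f \<equiv> germ_eq f (\<lambda>_. 0)"

lemma germ_eq_sym: "germ_eq f g \<Longrightarrow> germ_eq g f"
  unfolding germ_eq_def by (simp add: eq_commute)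

lemma germ_eq_trans: "germ_eq f g \<Longrightarrow> germ_eq g h \<Longrightarrow> germ_eq f h"
  unfolding germ_eq_def by (auto elim: eventually_elim2)

lemma germ_eq_add_zero: "germ_zero g \<Longrightarrow> germ_eq f (\<lambda>x. f x + g x)"
  unfolding germ_eq_def by (auto elim: eventually_mono)

definition poly_germ :: "(nat \<Rightarrow> real \<Rightarrow> complex) \<Rightarrow> (real \<Rightarrow> complex) \<Rightarrow> nat \<Rightarrow> real \<Rightarrow> complex" where
  "poly_germ a T n x = (\<Sum>i<n. a i x * T x ^ i)"

lemma poly_germ_Suc: "poly_germ a T (Suc n) x = poly_germ a T n x + a n x * T x ^ n"
  by (simp add: poly_germ_def)

lemma poly_germ_eq_if_zero_above:
  assumes "m \<le> n" "\<And>i. m \<le> i \<Longrightarrow> i < n \<Longrightarrow> a i x = 0"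
  shows "poly_germ a T n x = poly_germ a T m x"
  unfolding poly_germ_def using assms by (intro sum.mono_neutral_right) auto

lemma germ_zero_poly_germ:
  assumes "\<forall>i<n. germ_zero (a i)"
  shows "germ_zero (poly_germ a T n)"
proof -
  have "\<forall>\<^sub>F x in at_top. \<forall>i\<in>{..<n}. a i x = 0"
    using assms unfolding germ_eq_def by (intro eventually_ball_finite) auto
  then show ?thesis
    unfolding germ_eq_def by eventually_elim (simp add: poly_germ_def)
qed

text \<open>Splitting the exponents i < N by their residue r modulo m writes a polynomial in t as a
  polynomial in t of degree below m whose coefficients are polynomials in t^m.\<close>

lemma sum_powers_regroup:
  fixes c :: "nat \<Rightarrow> 'a::comm_semiring_1"
  assumes "m \<ge> 1"
  shows "(\<Sum>i<N. c i * t ^ i) =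
    (\<Sum>r<m. (\<Sum>j<N. (if j * m + r < N then c (j * m + r) else 0) * (t ^ m) ^ j) * t ^ r)"
proof -
  define g where "g i = (if i < N then c i * t ^ i else 0)" for i
  have power: "(t ^ m) ^ j * t ^ r = t ^ (j * m + r)" for j r
    by (simp add: power_add power_mult mult.commute[of j m])
  have "(\<Sum>r<m. (\<Sum>j<N. (if j * m + r < N then c (j * m + r) else 0) * (t ^ m) ^ j) * t ^ r)
      = (\<Sum>r<m. \<Sum>j<N. g (j * m + r))"
    unfolding sum_distrib_right
    by (intro sum.cong refl) (simp add: g_def power[symmetric] mult.assoc)
  also have "\<dots> = (\<Sum>j<N. \<Sum>r<m. g (j * m + r))"
    by (rule sum.swap)
  also have "\<dots> = (\<Sum>j<N. sum g {j * m..<j * m + m})"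
  proof (rule sum.cong[OF refl])
    fix j
    show "(\<Sum>r<m. g (j * m + r)) = sum g {j * m..<j * m + m}"
      using sum.shift_bounds_nat_ivl[of g 0 "j * m" m] by (simp add: atLeast0LessThan add.commute)
  qed
  also have "\<dots> = sum g {..<N * m}"
    by (rule sum.nat_group)
  also have "\<dots> = sum g {..<N}"
    using assms by (intro sum.mono_neutral_right) (auto simp: g_def)
  finally show ?thesis
    by (simp add: g_def)
qed

lemma poly_germ_regroup:
  assumes "m \<ge> 1"
  shows "poly_germ a T N x = poly_germ
    (\<lambda>r. poly_germ (\<lambda>j. if j * m + r < N then a (j * m + r) else (\<lambda>_. 0)) (\<lambda>y. T y ^ m) N) T m x"
  unfolding poly_germ_def using sum_powers_regroup[OF assms, where c="\<lambda>i. a i x" and N=N and t="T x"]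
  by (simp add: if_distrib[of "\<lambda>f. f x"] cong: if_cong)

lemma adjoin_eq:
  "adjoin S T = {f. \<exists>a b n. (\<forall>i. a i \<in> S \<and> b i \<in> S) \<and>
     germ_eq f (\<lambda>x. poly_germ a T n x / poly_germ b T n x)}"
  by (simp add: adjoin_def poly_germ_def)

section \<open>Leading terms of germs\<close>

definition log_monomial :: "real \<Rightarrow> real \<Rightarrow> real \<Rightarrow> real" where
  "log_monomial r s x = x powr r * ln x powr s"

definition has_leading_term :: "(real \<Rightarrow> complex) \<Rightarrow> complex \<Rightarrow> real \<Rightarrow> real \<Rightarrow> bool" where
  "has_leading_term f c r s \<longleftrightarrow>
     c \<noteq> 0 \<and> ((\<lambda>x. f x / of_real (log_monomial r s x)) \<longlongrightarrow> c) at_top"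

lemma log_monomial_pos: "x > 1 \<Longrightarrow> log_monomial r s x > 0"
  by (simp add: log_monomial_def)

lemma log_monomial_add:
  "x > 1 \<Longrightarrow> log_monomial (r + r') (s + s') x = log_monomial r s x * log_monomial r' s' x"
  by (simp add: log_monomial_def powr_add mult_ac)

lemma log_monomial_diff:
  "x > 1 \<Longrightarrow> log_monomial (r - r') (s - s') x = log_monomial r s x / log_monomial r' s' x"
  by (simp add: log_monomial_def powr_diff)

lemma log_monomial_power:
  assumes "x > 1" "p > 0"
  shows "log_monomial r s (x ^ p) = real p powr s * log_monomial (real p * r) s x"
proof -
  have "log_monomial r s (x ^ p) = (x powr real p) powr r * (real p * ln x) powr s"
    using assms by (simp add: log_monomial_def powr_realpow ln_realpow)
  also have "\<dots> = real p powr s * log_monomial (real p * r) s x"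
    using assms by (simp add: log_monomial_def powr_powr powr_mult)
  finally show ?thesis .
qed

lemma log_monomial_tendsto_0:
  assumes "r < 0 \<or> r = 0 \<and> s < 0"
  shows "(log_monomial r s \<longlongrightarrow> 0) at_top"
  using assms
proof
  assume "r < 0"
  then show ?thesis unfolding log_monomial_def by real_asymp
next
  assume "r = 0 \<and> s < 0"
  then show ?thesis unfolding log_monomial_def by real_asymp
qed

lemma has_leading_termI:
  assumes "c \<noteq> 0" "(g \<longlongrightarrow> c) at_top"
    and "\<forall>\<^sub>F x in at_top. g x = f x / of_real (log_monomial r s x)"
  shows "has_leading_term f c r s"
  unfolding has_leading_term_def using assms(1) tendsto_cong[OF assms(3)] assms(2) by simp

lemma has_leading_term_cong:
  assumes "germ_eq f g" "has_leading_term f c r s"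
  shows "has_leading_term g c r s"
proof (rule has_leading_termI)
  show "c \<noteq> 0" "((\<lambda>x. f x / of_real (log_monomial r s x)) \<longlongrightarrow> c) at_top"
    using assms(2) by (simp_all add: has_leading_term_def)
  show "\<forall>\<^sub>F x in at_top. f x / of_real (log_monomial r s x) = g x / of_real (log_monomial r s x)"
    using assms(1) unfolding germ_eq_def by eventually_elim simp
qed

lemma has_leading_term_eventually_nonzero:
  assumes "has_leading_term f c r s"
  shows "\<forall>\<^sub>F x in at_top. f x \<noteq> 0"
proof -
  have "\<forall>\<^sub>F x in at_top. f x / of_real (log_monomial r s x) \<noteq> 0"
    using assms unfolding has_leading_term_def using tendsto_imp_eventually_ne by blast
  then show ?thesis by eventually_elim auto
qed

lemma has_leading_term_not_germ_zero:
  assumes "has_leading_term f c r s"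
  shows "\<not> germ_zero f"
proof
  assume "germ_zero f"
  from eventually_conj[OF has_leading_term_eventually_nonzero[OF assms] this[unfolded germ_eq_def]]
  show False
    using eventually_happens'[OF trivial_limit_at_top_linorder] by blast
qed

lemma has_leading_term_mult:
  assumes "has_leading_term f a r s" "has_leading_term g b r' s'"
  shows "has_leading_term (\<lambda>x. f x * g x) (a * b) (r + r') (s + s')"
proof -
  have lim: "((\<lambda>x. f x / of_real (log_monomial r s x) * (g x / of_real (log_monomial r' s' x)))
      \<longlongrightarrow> a * b) at_top"
    using assms unfolding has_leading_term_def by (intro tendsto_mult) auto
  have ev: "\<forall>\<^sub>F x in at_top. f x / of_real (log_monomial r s x) * (g x / of_real (log_monomial r' s' x))
      = f x * g x / of_real (log_monomial (r + r') (s + s') x)"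
    using eventually_gt_at_top[of 1] by eventually_elim (simp add: log_monomial_add)
  show ?thesis
    using assms by (intro has_leading_termI[OF _ lim ev]) (simp add: has_leading_term_def)
qed

lemma has_leading_term_divide:
  assumes "has_leading_term f a r s" "has_leading_term g b r' s'"
  shows "has_leading_term (\<lambda>x. f x / g x) (a / b) (r - r') (s - s')"
proof -
  have lim: "((\<lambda>x. f x / of_real (log_monomial r s x) / (g x / of_real (log_monomial r' s' x)))
      \<longlongrightarrow> a / b) at_top"
    using assms unfolding has_leading_term_def by (intro tendsto_divide) auto
  have ev: "\<forall>\<^sub>F x in at_top. f x / of_real (log_monomial r s x) / (g x / of_real (log_monomial r' s' x))
      = f x / g x / of_real (log_monomial (r - r') (s - s') x)"
    using eventually_gt_at_top[of 1]
  proof eventually_elim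
    case (elim x)
    then have "log_monomial r s x > 0" "log_monomial r' s' x > 0"
      by (simp_all add: log_monomial_pos)
    then show ?case
      using elim by (simp add: log_monomial_diff field_simps)
  qed
  show ?thesis
    using assms by (intro has_leading_termI[OF _ lim ev]) (simp add: has_leading_term_def)
qed

lemma has_leading_term_phi:
  assumes "has_leading_term f c r s" "p > 0"
  shows "has_leading_term (phi p f) (c * of_real (real p powr s)) (real p * r) s"
proof -
  have "filterlim (\<lambda>x::real. x ^ p) at_top at_top"
    using assms(2) by (intro filterlim_pow_at_top filterlim_ident)
  from filterlim_compose[OF _ this] assms(1)
  have "((\<lambda>x. f (x ^ p) / of_real (log_monomial r s (x ^ p))) \<longlongrightarrow> c) at_top"
    unfolding has_leading_term_def by blast
  from tendsto_mult[OF this tendsto_const]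
  have lim: "((\<lambda>x. f (x ^ p) / of_real (log_monomial r s (x ^ p)) * of_real (real p powr s))
      \<longlongrightarrow> c * of_real (real p powr s)) at_top" .
  have ev: "\<forall>\<^sub>F x in at_top. f (x ^ p) / of_real (log_monomial r s (x ^ p)) * of_real (real p powr s)
      = phi p f x / of_real (log_monomial (real p * r) s x)"
    using eventually_gt_at_top[of 1]
  proof eventually_elim
    case (elim x)
    have "real p powr s > 0"
      using assms(2) by simp
    then show ?case
      using elim assms(2) by (simp add: log_monomial_power phi_def)
  qed
  show ?thesis
    using assms by (intro has_leading_termI[OF _ lim ev]) (simp add: has_leading_term_def)
qed

lemma has_leading_term_dominated:
  assumes "has_leading_term g b r' s'" "r' < r \<or> r' = r \<and> s' < s"
  shows "((\<lambda>x. g x / of_real (log_monomial r s x)) \<longlongrightarrow> 0) at_top"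
proof -
  have "(log_monomial (r' - r) (s' - s) \<longlongrightarrow> 0) at_top"
    using assms(2) by (intro log_monomial_tendsto_0) argo
  from tendsto_of_real[OF this, where 'a=complex]
  have "((\<lambda>x. of_real (log_monomial (r' - r) (s' - s) x) :: complex) \<longlongrightarrow> 0) at_top"
    by simp
  with assms(1)
  have lim: "((\<lambda>x. g x / of_real (log_monomial r' s' x) * of_real (log_monomial (r' - r) (s' - s) x))
      \<longlongrightarrow> 0) at_top"
    unfolding has_leading_term_def using tendsto_mult by fastforce
  have "\<forall>\<^sub>F x in at_top. g x / of_real (log_monomial r' s' x) * of_real (log_monomial (r' - r) (s' - s) x)
      = g x / of_real (log_monomial r s x)"
    using eventually_gt_at_top[of 1]
  proof eventually_elim
    case (elim x)
    then have "log_monomial r s x > 0" "log_monomial r' s' x > 0"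
      by (simp_all add: log_monomial_pos)
    then show ?case
      using elim by (simp add: log_monomial_diff field_simps)
  qed
  from tendsto_cong[OF this] lim show ?thesis
    by simp
qed

lemma has_leading_term_add_dominated:
  assumes "has_leading_term f a r s" "has_leading_term g b r' s'" "r' < r \<or> r' = r \<and> s' < s"
  shows "has_leading_term (\<lambda>x. f x + g x) a r s"
proof -
  have "((\<lambda>x. f x / of_real (log_monomial r s x) + g x / of_real (log_monomial r s x))
      \<longlongrightarrow> a + 0) at_top"
    using assms(1) has_leading_term_dominated[OF assms(2,3)]
    unfolding has_leading_term_def by (intro tendsto_add) auto
  then show ?thesis
    using assms(1) by (simp add: has_leading_term_def add_divide_distrib)
qed

lemma has_leading_term_unique:
  assumes "has_leading_term f a r s" "has_leading_term f b r' s'"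
  shows "r = r' \<and> s = s' \<and> a = b"
proof -
  have not_dominated: False
    if "has_leading_term f a r s" "has_leading_term f b r' s'" "r' < r \<or> r' = r \<and> s' < s"
    for a b r s r' s'
  proof -
    have "((\<lambda>x. f x / of_real (log_monomial r s x)) \<longlongrightarrow> a) at_top" "a \<noteq> 0"
      using that(1) by (simp_all add: has_leading_term_def)
    then show False
      using tendsto_unique[OF trivial_limit_at_top_linorder _ has_leading_term_dominated[OF that(2,3)]]
      by blast
  qed
  have "r = r'" "s = s'"
    using not_dominated[OF assms] not_dominated[OF assms(2,1)] by argo+
  then have "((\<lambda>x. f x / of_real (log_monomial r s x)) \<longlongrightarrow> a) at_top"
    "((\<lambda>x. f x / of_real (log_monomial r s x)) \<longlongrightarrow> b) at_top"
    using assms by (simp_all add: has_leading_term_def)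
  with \<open>r = r'\<close> \<open>s = s'\<close> show ?thesis
    using tendsto_unique[OF trivial_limit_at_top_linorder] by blast
qed

definition regular_germ :: "(real \<Rightarrow> complex) \<Rightarrow> bool" where
  "regular_germ f \<longleftrightarrow> germ_zero f \<or> (\<exists>c r s. has_leading_term f c r s)"

lemma regular_germ_cong: "regular_germ f \<Longrightarrow> germ_eq f g \<Longrightarrow> regular_germ g"
  unfolding regular_germ_def
  using germ_eq_trans germ_eq_sym has_leading_term_cong by blast

lemma regular_germ_eventually_nonzero:
  "regular_germ f \<Longrightarrow> \<not> germ_zero f \<Longrightarrow> \<forall>\<^sub>F x in at_top. f x \<noteq> 0"
  unfolding regular_germ_def using has_leading_term_eventually_nonzero by blast

lemma regular_germ_divide:
  assumes "regular_germ f" "regular_germ g"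
  shows "regular_germ (\<lambda>x. f x / g x)"
  using assms unfolding regular_germ_def germ_eq_def
  by (auto elim: eventually_mono dest: has_leading_term_divide)

section \<open>Elements of K and K' have leading terms\<close>

lemma tendsto_poly_root_divide_power:
  fixes P :: "complex poly"
  assumes "j > 0"
  shows "((\<lambda>x. poly P (of_real (x powr (1 / real j))) / of_real (x powr (1 / real j)) ^ degree P)
     \<longlongrightarrow> lead_coeff P) at_top"
proof -
  have "filterlim (\<lambda>x. norm (complex_of_real (x powr (1 / real j)))) at_top at_top"
    using assms by simp real_asymp
  then have "filterlim (\<lambda>x. complex_of_real (x powr (1 / real j))) at_infinity at_top"
    by (rule filterlim_norm_at_top_imp_at_infinity)
  then show ?thesis
    by (rule filterlim_compose[OF poly_divide_tendsto_aux])
qed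

lemma has_leading_term_poly_root:
  fixes P :: "complex poly"
  assumes "P \<noteq> 0" "j > 0"
  shows "has_leading_term (\<lambda>x. poly P (of_real (x powr (1 / real j))))
    (lead_coeff P) (real (degree P) / real j) 0"
proof (rule has_leading_termI[OF _ tendsto_poly_root_divide_power[OF assms(2)]])
  show "lead_coeff P \<noteq> 0"
    using assms(1) by simp
  show "\<forall>\<^sub>F x in at_top.
      poly P (of_real (x powr (1 / real j))) / of_real (x powr (1 / real j)) ^ degree P =
      poly P (of_real (x powr (1 / real j))) / of_real (log_monomial (real (degree P) / real j) 0 x)"
    using eventually_gt_at_top[of 1]
  proof eventually_elim
    case (elim x)
    then have "log_monomial (real (degree P) / real j) 0 x = (x powr (1 / real j)) powr real (degree P)"
      by (simp add: log_monomial_def powr_powr)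
    also have "\<dots> = (x powr (1 / real j)) ^ degree P"
      using elim by (simp add: powr_realpow)
    finally show ?case
      by simp
  qed
qed

lemma KK_leading_term:
  assumes "a \<in> KK"
  shows "germ_zero a \<or> (\<exists>c r. has_leading_term a c r 0)"
proof -
  obtain j P Q where j: "j \<ge> 1" and a: "germ_eq a
     (\<lambda>x. poly P (of_real (x powr (1 / real j))) / poly Q (of_real (x powr (1 / real j))))"
    using assms unfolding KK_def Kj_def by auto
  show ?thesis
  proof (cases "P = 0 \<or> Q = 0")
    case True
    with a show ?thesis
      by auto
  next
    case False
    with j have "has_leading_term
        (\<lambda>x. poly P (of_real (x powr (1 / real j))) / poly Q (of_real (x powr (1 / real j))))
        (lead_coeff P / lead_coeff Q) (real (degree P) / real j - real (degree Q) / real j) (0 - 0)"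
      by (intro has_leading_term_divide has_leading_term_poly_root) auto
    with a show ?thesis
      using has_leading_term_cong germ_eq_sym by fastforce
  qed
qed

lemma has_leading_term_log_power: "has_leading_term (\<lambda>x. logfn x ^ n) 1 0 (real n)"
proof (rule has_leading_termI[OF _ tendsto_const])
  show "\<forall>\<^sub>F x in at_top. 1 = logfn x ^ n / of_real (log_monomial 0 (real n) x)"
    using eventually_gt_at_top[of 1]
  proof eventually_elim
    case (elim x)
    then have "ln x > 0"
      by simp
    then show ?case
      using elim by (simp add: log_monomial_def logfn_def powr_realpow)
  qed
qed simp

text \<open>Adding a term whose leading power of log z exceeds all those occurring so far cannot cause
  cancellation.\<close>

lemma leading_term_add_higher_log_power:
  assumes S: "germ_zero S \<or> (\<exists>c r s. s < n \<and> has_leading_term S c r (real s))"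
    and T: "germ_zero T \<or> (\<exists>c r. has_leading_term T c r (real n))"
  shows "germ_zero (\<lambda>x. S x + T x) \<or>
    (\<exists>c r s. s < Suc n \<and> has_leading_term (\<lambda>x. S x + T x) c r (real s))"
proof (cases "germ_zero T")
  case True
  from S show ?thesis
  proof
    assume "germ_zero S"
    with True have "germ_zero (\<lambda>x. S x + T x)"
      unfolding germ_eq_def by eventually_elim simp
    then show ?thesis ..
  next
    assume "\<exists>c r s. s < n \<and> has_leading_term S c r (real s)"
    then show ?thesis
      using has_leading_term_cong[OF germ_eq_add_zero[OF True]] less_SucI by blast
  qed
next
  case False
  with T obtain c r where T: "has_leading_term T c r (real n)"
    by blast
  have T_S: "germ_eq T (\<lambda>x. S x + T x)" if "germ_zero S"
    using germ_eq_add_zero[OF that, of T] by (simp add: add.commute)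
  show ?thesis
  proof (cases "germ_zero S")
    case True
    then show ?thesis
      using has_leading_term_cong[OF T_S T] by blast
  next
    case False
    with S obtain c' r' s where s: "s < n" and S: "has_leading_term S c' r' (real s)"
      by blast
    show ?thesis
    proof (cases "r' \<le> r")
      case True
      with s have "r' < r \<or> r' = r \<and> real s < real n"
        by auto
      from has_leading_term_add_dominated[OF T S this] show ?thesis
        by (auto simp: add.commute)
    next
      case False
      then have "r < r' \<or> r = r' \<and> real n < real s"
        by auto
      from has_leading_term_add_dominated[OF S T this] s show ?thesis
        using less_SucI by blast
    qed
  qed
qed

lemma log_poly_leading_term:
  assumes "\<forall>i. a i \<in> KK"
  shows "germ_zero (poly_germ a logfn n) \<or>
    (\<exists>c r s. s < n \<and> has_leading_term (poly_germ a logfn n) c r (real s))"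
proof (induction n)
  case 0
  then show ?case
    by (simp add: poly_germ_def germ_eq_def)
next
  case (Suc n)
  have "germ_zero (\<lambda>x. a n x * logfn x ^ n) \<or> (\<exists>c r. has_leading_term (\<lambda>x. a n x * logfn x ^ n) c r (real n))"
    using KK_leading_term[of "a n"] assms has_leading_term_mult[OF _ has_leading_term_log_power[of n]]
    unfolding germ_eq_def by (fastforce elim: eventually_mono)
  from leading_term_add_higher_log_power[OF Suc.IH this] show ?case
    by (simp add: poly_germ_Suc[abs_def])
qed

lemma regular_log_poly: "\<forall>i. a i \<in> KK \<Longrightarrow> regular_germ (poly_germ a logfn n)"
  using log_poly_leading_term unfolding regular_germ_def by blast

lemma KK'_regular:
  assumes "f \<in> KK'"
  shows "regular_germ f"
proof -
  obtain a b n where "\<forall>i. a i \<in> KK \<and> b i \<in> KK"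
    and f: "germ_eq f (\<lambda>x. poly_germ a logfn n x / poly_germ b logfn n x)"
    using assms unfolding KK'_def adjoin_eq by blast
  then have "regular_germ (\<lambda>x. poly_germ a logfn n x / poly_germ b logfn n x)"
    by (intro regular_germ_divide regular_log_poly) auto
  then show ?thesis
    using regular_germ_cong germ_eq_sym f by blast
qed

lemma KK'_representation:
  assumes "f \<in> KK'"
  shows "germ_zero f \<or> (\<exists>a b n. (\<forall>i. a i \<in> KK \<and> b i \<in> KK) \<and> \<not> germ_zero (poly_germ b logfn n) \<and>
    germ_eq (\<lambda>x. f x * poly_germ b logfn n x) (poly_germ a logfn n))"
proof -
  obtain a b n where ab: "\<forall>i. a i \<in> KK \<and> b i \<in> KK"
    and f: "germ_eq f (\<lambda>x. poly_germ a logfn n x / poly_germ b logfn n x)"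
    using assms unfolding KK'_def adjoin_eq by blast
  consider "germ_zero (poly_germ b logfn n)" | c r s where "has_leading_term (poly_germ b logfn n) c r s"
    using log_poly_leading_term[of b n] ab by blast
  then show ?thesis
  proof cases
    case 1
    with f have "germ_zero f"
      unfolding germ_eq_def by eventually_elim simp
    then show ?thesis ..
  next
    case 2
    from f has_leading_term_eventually_nonzero[OF 2]
    have "germ_eq (\<lambda>x. f x * poly_germ b logfn n x) (poly_germ a logfn n)"
      unfolding germ_eq_def by eventually_elim simp
    with ab 2 show ?thesis
      using has_leading_term_not_germ_zero by blast
  qed
qed

section \<open>Germs invariant under phi\<close>

lemma has_leading_term_phi_invariant:
  assumes "p \<ge> 2" "has_leading_term e c r s" "germ_eq (phi p e) e"
  shows "r = 0 \<and> s = 0"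
proof -
  have "has_leading_term e (c * of_real (real p powr s)) (real p * r) s"
    using assms by (intro has_leading_term_cong[OF _ has_leading_term_phi]) auto
  from has_leading_term_unique[OF assms(2) this]
  have "r = real p * r" "c = c * of_real (real p powr s)"
    by auto
  moreover have "c \<noteq> 0"
    using assms(2) by (simp add: has_leading_term_def)
  ultimately have "(real p - 1) * r = 0" "real p powr s = 1"
    by (auto simp: algebra_simps)
  with assms(1) show ?thesis
    by simp
qed

text \<open>Follow the sequence x, x^p, x^(p^2), ... along which e is constant and which tends to
  infinity.\<close>

lemma eventually_eq_limit_if_pow_invariant:
  fixes e :: "real \<Rightarrow> 'a::t2_space"
  assumes "p \<ge> 2" "(e \<longlongrightarrow> c) at_top" "\<forall>\<^sub>F x in at_top. e (x ^ p) = e x"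
  shows "\<forall>\<^sub>F x in at_top. e x = c"
proof -
  obtain x0 where x0: "\<And>x. x \<ge> x0 \<Longrightarrow> e (x ^ p) = e x"
    using assms(3) by (auto simp: eventually_at_top_linorder)
  have "e x = c" if x: "x \<ge> max x0 2" for x
  proof -
    define u where "u k = x ^ (p ^ k)" for k
    have "x0 \<le> u k" for k
      using x assms(1) power_increasing[of 1 "p ^ k" x] by (simp add: u_def)
    have e_u: "e (u k) = e x" for k
    proof (induction k)
      case (Suc k)
      have "u (Suc k) = u k ^ p"
        by (simp add: u_def power_mult[symmetric] mult.commute)
      with Suc x0[OF \<open>x0 \<le> u k\<close>] show ?case
        by simp
    qed (simp add: u_def)
    have "real k \<le> u k" for k
    proof -
      have "k < 2 ^ k" "(2::nat) ^ k \<le> p ^ k"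
        using assms(1) by (simp_all add: less_exp power_mono)
      then have "k \<le> p ^ k"
        by linarith
      have "real k \<le> 2 ^ k"
        using \<open>k < 2 ^ k\<close> by (metis less_imp_le of_nat_le_iff of_nat_numeral of_nat_power)
      also have "\<dots> \<le> x ^ k"
        using x by (simp add: power_mono)
      also have "\<dots> \<le> x ^ (p ^ k)"
        using x \<open>k \<le> p ^ k\<close> by (intro power_increasing) auto
      finally show ?thesis
        by (simp add: u_def)
    qed
    then have "filterlim u at_top sequentially"
      by (intro filterlim_at_top_mono[OF filterlim_real_sequentially]) auto
    from filterlim_compose[OF assms(2) this] have "((\<lambda>k. e x) \<longlongrightarrow> c) sequentially"
      by (simp add: e_u)
    then show ?thesis
      using LIMSEQ_const_iff by blast
  qed
  then show ?thesis
    unfolding eventually_at_top_linorder by blast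
qed

lemma regular_germ_phi_invariant_imp_constant:
  assumes "p \<ge> 2" "regular_germ e" "germ_eq (phi p e) e"
  shows "\<exists>c. germ_eq e (\<lambda>_. c)"
  using assms(2) unfolding regular_germ_def
proof
  assume "\<exists>c r s. has_leading_term e c r s"
  then obtain c r s where e: "has_leading_term e c r s"
    by blast
  with assms have "r = 0" "s = 0"
    using has_leading_term_phi_invariant by blast+
  with e have "((\<lambda>x. e x / of_real (log_monomial 0 0 x)) \<longlongrightarrow> c) at_top"
    by (simp add: has_leading_term_def)
  moreover have "\<forall>\<^sub>F x in at_top. e x / of_real (log_monomial 0 0 x) = e x"
    using eventually_gt_at_top[of 1] by eventually_elim (simp add: log_monomial_def)
  ultimately have "(e \<longlongrightarrow> c) at_top"
    using tendsto_cong by fastforce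
  then have "germ_eq e (\<lambda>_. c)"
    using eventually_eq_limit_if_pow_invariant[OF assms(1)] assms(3)
    by (simp add: germ_eq_def phi_def)
  then show ?thesis ..
qed blast

lemma
  assumes "germ_subfield L"
  shows germ_subfield_cong: "f \<in> L \<Longrightarrow> germ_eq f g \<Longrightarrow> g \<in> L"
    and germ_subfield_zero: "(\<lambda>_. 0) \<in> L"
    and germ_subfield_one: "(\<lambda>_. 1) \<in> L"
    and germ_subfield_add: "f \<in> L \<Longrightarrow> g \<in> L \<Longrightarrow> (\<lambda>x. f x + g x) \<in> L"
    and germ_subfield_mult: "f \<in> L \<Longrightarrow> g \<in> L \<Longrightarrow> (\<lambda>x. f x * g x) \<in> L"
    and germ_subfield_minus: "f \<in> L \<Longrightarrow> (\<lambda>x. - f x) \<in> L"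
    and germ_subfield_inverse: "f \<in> L \<Longrightarrow> (\<lambda>x. inverse (f x)) \<in> L"
  using assms unfolding germ_subfield_def by blast+

lemma germ_subfield_diff:
  "germ_subfield L \<Longrightarrow> f \<in> L \<Longrightarrow> g \<in> L \<Longrightarrow> (\<lambda>x. f x - g x) \<in> L"
  using germ_subfield_add[of L f "\<lambda>x. - g x"] germ_subfield_minus by simp

lemma germ_subfield_divide:
  "germ_subfield L \<Longrightarrow> f \<in> L \<Longrightarrow> g \<in> L \<Longrightarrow> (\<lambda>x. f x / g x) \<in> L"
  using germ_subfield_mult[of L f "\<lambda>x. inverse (g x)"] germ_subfield_inverse
  by (simp add: divide_inverse)

lemma germ_subfield_power:
  assumes "germ_subfield L" "f \<in> L"
  shows "(\<lambda>x. f x ^ n) \<in> L"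
  by (induction n) (simp_all add: assms germ_subfield_one germ_subfield_mult)

lemma germ_subfield_poly_germ:
  assumes "germ_subfield L" "\<forall>i<n. a i \<in> L" "T \<in> L"
  shows "poly_germ a T n \<in> L"
  using assms(2)
proof (induction n)
  case 0
  then show ?case
    using germ_subfield_zero[OF assms(1)] by (simp add: poly_germ_def)
next
  case (Suc n)
  have "(\<lambda>x. poly_germ a T n x + a n x * T x ^ n) \<in> L"
    using Suc assms by (simp add: germ_subfield_add germ_subfield_mult germ_subfield_power)
  then show ?case
    by (simp add: poly_germ_def)
qed

lemma const_in_KK: "(\<lambda>_. c) \<in> KK"
proof -
  have "(\<lambda>_. c) \<in> Kj 1"
    unfolding Kj_def germ_eq_def by (intro CollectI exI[of _ "[:c:]"] exI[of _ 1]) simp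
  then show ?thesis
    unfolding KK_def by auto
qed

lemma germ_zero_in_adjoin: "c \<in> S \<Longrightarrow> germ_zero f \<Longrightarrow> f \<in> adjoin S T"
  unfolding adjoin_eq by (intro CollectI exI[of _ "\<lambda>_. c"] exI[of _ 0] conjI) (simp_all add: poly_germ_def)

lemma ratio_in_adjoin:
  assumes "a \<in> S" "b \<in> S" "germ_eq f (\<lambda>x. a x / b x)"
  shows "f \<in> adjoin S T"
  unfolding adjoin_eq using assms
  by (intro CollectI exI[of _ "\<lambda>_. a"] exI[of _ "\<lambda>_. b"] exI[of _ 1] conjI)
    (simp_all add: poly_germ_def)

lemma adjoin_subset:
  assumes "germ_subfield L" "S \<subseteq> L" "T \<in> L"
  shows "adjoin S T \<subseteq> L"
proof
  fix f
  assume "f \<in> adjoin S T"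
  then obtain a b n where "\<forall>i. a i \<in> S \<and> b i \<in> S"
    and f: "germ_eq f (\<lambda>x. poly_germ a T n x / poly_germ b T n x)"
    unfolding adjoin_eq by blast
  with assms have "(\<lambda>x. poly_germ a T n x / poly_germ b T n x) \<in> L"
    by (auto intro!: germ_subfield_divide germ_subfield_poly_germ)
  then show "f \<in> L"
    using germ_subfield_cong[OF assms(1)] germ_eq_sym[OF f] by blast
qed

section \<open>Algebraic relations of log z over an intermediate field\<close>

definition monic_log_relation :: "(real \<Rightarrow> complex) set \<Rightarrow> nat \<Rightarrow> (nat \<Rightarrow> real \<Rightarrow> complex) \<Rightarrow> bool" where
  "monic_log_relation L n \<mu> \<longleftrightarrow>
     (\<forall>i<n. \<mu> i \<in> L) \<and> germ_zero (\<lambda>x. poly_germ \<mu> logfn n x + logfn x ^ n)"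

definition log_powers_independent :: "(real \<Rightarrow> complex) set \<Rightarrow> nat \<Rightarrow> bool" where
  "log_powers_independent L n \<longleftrightarrow>
     (\<forall>d. (\<forall>i<n. d i \<in> L) \<longrightarrow> germ_zero (poly_germ d logfn n) \<longrightarrow> (\<forall>i<n. germ_zero (d i)))"

locale intermediate_field =
  fixes L :: "(real \<Rightarrow> complex) set"
  assumes subfield: "germ_subfield L"
    and KK_subset: "KK \<subseteq> L"
    and subset_KK': "L \<subseteq> KK'"
begin

lemma const_mem: "(\<lambda>_. c) \<in> L"
  using KK_subset const_in_KK by blast

lemma eventually_nonzero: "f \<in> L \<Longrightarrow> \<not> germ_zero f \<Longrightarrow> \<forall>\<^sub>F x in at_top. f x \<noteq> 0"
  using subset_KK' KK'_regular regular_germ_eventually_nonzero by blast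

lemma no_monic_log_relation_if_independent:
  assumes "log_powers_independent L n" "m < n"
  shows "\<not> monic_log_relation L m \<mu>"
proof
  assume rel: "monic_log_relation L m \<mu>"
  define d where "d i = (if i < m then \<mu> i else if i = m then (\<lambda>_. 1) else (\<lambda>_. 0))" for i
  have "\<forall>i<n. d i \<in> L"
    using rel germ_subfield_one[OF subfield] germ_subfield_zero[OF subfield]
    by (simp add: d_def monic_log_relation_def)
  moreover have "poly_germ d logfn n = (\<lambda>x. poly_germ \<mu> logfn m x + logfn x ^ m)"
  proof
    fix x
    have "poly_germ d logfn n x = poly_germ d logfn (Suc m) x"
      using assms(2) by (intro poly_germ_eq_if_zero_above) (auto simp: d_def)
    also have "\<dots> = poly_germ \<mu> logfn m x + logfn x ^ m"
      by (simp add: poly_germ_Suc d_def poly_germ_def)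
    finally show "poly_germ d logfn n x = poly_germ \<mu> logfn m x + logfn x ^ m" .
  qed
  ultimately have "\<forall>i<n. germ_zero (d i)"
    using assms(1) rel unfolding log_powers_independent_def monic_log_relation_def by simp
  then have "germ_zero (d m)"
    using assms(2) by blast
  then show False
    by (simp add: d_def germ_eq_def)
qed

lemma monic_log_relation_divide_leading:
  assumes "\<forall>i\<le>n. d i \<in> L" "germ_zero (poly_germ d logfn (Suc n))" "\<not> germ_zero (d n)"
  shows "monic_log_relation L n (\<lambda>i x. d i x / d n x)"
  unfolding monic_log_relation_def
proof
  show "\<forall>i<n. (\<lambda>x. d i x / d n x) \<in> L"
    using assms(1) germ_subfield_divide[OF subfield] by simp
  have "\<forall>\<^sub>F x in at_top. d n x \<noteq> 0"
    using assms(1,3) eventually_nonzero by simp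
  with assms(2) show "germ_zero (\<lambda>x. poly_germ (\<lambda>i x. d i x / d n x) logfn n x + logfn x ^ n)"
    unfolding germ_eq_def
  proof eventually_elim
    case (elim x)
    then have "(poly_germ d logfn n x + d n x * logfn x ^ n) / d n x = 0"
      by (simp add: poly_germ_Suc)
    with elim(2) show ?case
      by (simp add: poly_germ_def add_divide_distrib sum_divide_distrib)
  qed
qed

lemma independent_if_no_monic_log_relation:
  "(\<And>m \<mu>. m < n \<Longrightarrow> \<not> monic_log_relation L m \<mu>) \<Longrightarrow> log_powers_independent L n"
proof (induction n)
  case 0
  then show ?case
    by (simp add: log_powers_independent_def)
next
  case (Suc n)
  show ?case
    unfolding log_powers_independent_def
  proof (rule allI, intro impI)
    fix d
    assume d: "\<forall>i<Suc n. d i \<in> L" and zero: "germ_zero (poly_germ d logfn (Suc n))"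
    have "germ_zero (d n)"
      using monic_log_relation_divide_leading[of n d] d zero Suc.prems by auto
    with zero have "germ_zero (poly_germ d logfn n)"
      unfolding germ_eq_def by eventually_elim (simp add: poly_germ_Suc)
    moreover have "log_powers_independent L n"
      using Suc by simp
    ultimately show "\<forall>i<Suc n. germ_zero (d i)"
      using d \<open>germ_zero (d n)\<close> by (auto simp: log_powers_independent_def less_Suc_eq)
  qed
qed

text \<open>Comparing coefficients in f B = A gives f b_i = a_i for every i.\<close>

lemma eq_ratio_of_coefficients:
  assumes indep: "log_powers_independent L n" and "f \<in> L" "\<forall>i<n. a i \<in> L \<and> b i \<in> L"
    and nonzero: "\<not> germ_zero (poly_germ b logfn n)"
    and eq: "germ_eq (\<lambda>x. f x * poly_germ b logfn n x) (poly_germ a logfn n)"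
  shows "\<exists>i<n. germ_eq f (\<lambda>x. a i x / b i x)"
proof -
  define d where "d i = (\<lambda>x. f x * b i x - a i x)" for i
  have "\<forall>i<n. d i \<in> L"
    using assms(2,3) by (simp add: d_def germ_subfield_diff germ_subfield_mult subfield)
  moreover have "germ_zero (poly_germ d logfn n)"
    using eq unfolding germ_eq_def
    by eventually_elim (simp add: poly_germ_def d_def sum_distrib_left sum_subtractf algebra_simps)
  ultimately have d_zero: "\<forall>i<n. germ_zero (d i)"
    using indep by (simp add: log_powers_independent_def)
  obtain i where i: "i < n" "\<not> germ_zero (b i)"
    using nonzero germ_zero_poly_germ by blast
  then have "\<forall>\<^sub>F x in at_top. b i x \<noteq> 0"
    using assms(3) eventually_nonzero by blast
  with d_zero i(1) have "germ_eq f (\<lambda>x. a i x / b i x)"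
    unfolding germ_eq_def d_def by (auto elim: eventually_elim2 simp: field_simps)
  with i(1) show ?thesis
    by blast
qed

lemma subset_adjoin_if_independent:
  assumes "\<And>n. log_powers_independent L n"
  shows "L \<subseteq> adjoin KK (\<lambda>x. logfn x ^ 0)"
proof
  fix f
  assume f: "f \<in> L"
  then consider "germ_zero f" | a b n where "\<forall>i. a i \<in> KK \<and> b i \<in> KK"
    "\<not> germ_zero (poly_germ b logfn n)" "germ_eq (\<lambda>x. f x * poly_germ b logfn n x) (poly_germ a logfn n)"
    using KK'_representation subset_KK' by blast
  then show "f \<in> adjoin KK (\<lambda>x. logfn x ^ 0)"
  proof cases
    case 1
    then show ?thesis
      using germ_zero_in_adjoin const_in_KK by blast
  next
    case (2 a b n)
    then obtain i where "germ_eq f (\<lambda>x. a i x / b i x)"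
      using eq_ratio_of_coefficients[OF assms f] KK_subset by blast
    then show ?thesis
      using 2 ratio_in_adjoin by blast
  qed
qed

lemma subset_adjoin_log_power:
  assumes "m \<ge> 1" "(\<lambda>x. logfn x ^ m) \<in> L" "log_powers_independent L m"
  shows "L \<subseteq> adjoin KK (\<lambda>x. logfn x ^ m)"
proof
  fix f
  assume f: "f \<in> L"
  then consider "germ_zero f" | a b N where "\<forall>i. a i \<in> KK \<and> b i \<in> KK"
    "\<not> germ_zero (poly_germ b logfn N)" "germ_eq (\<lambda>x. f x * poly_germ b logfn N x) (poly_germ a logfn N)"
    using KK'_representation subset_KK' by blast
  then show "f \<in> adjoin KK (\<lambda>x. logfn x ^ m)"
  proof cases
    case 1
    then show ?thesis
      using germ_zero_in_adjoin const_in_KK by blast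
  next
    case (2 a b N)
    define residue where "residue c r = (\<lambda>j. if j * m + r < N then c (j * m + r) else (\<lambda>_. 0))"
      for c :: "nat \<Rightarrow> real \<Rightarrow> complex" and r
    define a' b' where "a' = (\<lambda>r. poly_germ (residue a r) (\<lambda>x. logfn x ^ m) N)"
      and "b' = (\<lambda>r. poly_germ (residue b r) (\<lambda>x. logfn x ^ m) N)"
    have residue_KK: "residue a r j \<in> KK" "residue b r j \<in> KK" for r j
      using 2(1) const_in_KK by (simp_all add: residue_def)
    have regroup: "poly_germ a logfn N = poly_germ a' logfn m" "poly_germ b logfn N = poly_germ b' logfn m"
      unfolding a'_def b'_def residue_def by (rule ext, rule poly_germ_regroup[OF assms(1)])+
    have "a' r \<in> L \<and> b' r \<in> L" for r
      using residue_KK KK_subset assms(2) unfolding a'_def b'_def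
      by (auto intro!: germ_subfield_poly_germ[OF subfield])
    then obtain r where "germ_eq f (\<lambda>x. a' r x / b' r x)"
      using eq_ratio_of_coefficients[OF assms(3) f, of a' b'] 2(2,3) unfolding regroup by blast
    then show ?thesis
      unfolding adjoin_eq a'_def b'_def using residue_KK
      by (intro CollectI exI[of _ "residue a r"] exI[of _ "residue b r"] exI[of _ N]) simp
  qed
qed

lemma monic_log_relation_unique:
  assumes "log_powers_independent L n" "monic_log_relation L n \<mu>" "monic_log_relation L n \<nu>" "i < n"
  shows "germ_eq (\<mu> i) (\<nu> i)"
proof -
  have "\<forall>i<n. (\<lambda>x. \<mu> i x - \<nu> i x) \<in> L"
    using assms(2,3) by (simp add: monic_log_relation_def germ_subfield_diff subfield)
  moreover have "germ_zero (poly_germ (\<lambda>i x. \<mu> i x - \<nu> i x) logfn n)"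
  proof -
    have "germ_zero (\<lambda>x. poly_germ \<mu> logfn n x + logfn x ^ n)"
      "germ_zero (\<lambda>x. poly_germ \<nu> logfn n x + logfn x ^ n)"
      using assms(2,3) by (simp_all add: monic_log_relation_def)
    then show ?thesis
      unfolding germ_eq_def
    proof eventually_elim
      case (elim x)
      then have "poly_germ \<mu> logfn n x = poly_germ \<nu> logfn n x"
        by (metis add_right_cancel)
      then show ?case
        by (simp add: poly_germ_def left_diff_distrib sum_subtractf)
    qed
  qed
  ultimately have "germ_zero (\<lambda>x. \<mu> i x - \<nu> i x)"
    using assms(1)[unfolded log_powers_independent_def, rule_format, of "\<lambda>i x. \<mu> i x - \<nu> i x"] assms(4)
    by blast
  then show ?thesis
    unfolding germ_eq_def by (auto elim: eventually_mono)
qed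

lemma monic_log_relation_log_power:
  assumes "m \<ge> 1" "(\<lambda>x. logfn x ^ m) \<in> L"
  shows "monic_log_relation L m (\<lambda>i. if i = 0 then (\<lambda>x. - (logfn x ^ m)) else (\<lambda>_. 0))"
proof -
  let ?c = "\<lambda>i. if i = 0 then (\<lambda>x. - (logfn x ^ m)) else (\<lambda>_. 0)"
  have "poly_germ ?c logfn m x = - (logfn x ^ m)" for x
  proof -
    have "poly_germ ?c logfn m x = poly_germ ?c logfn 1 x"
      using assms(1) by (intro poly_germ_eq_if_zero_above) auto
    then show ?thesis
      by (simp add: poly_germ_def)
  qed
  then show ?thesis
    using assms germ_subfield_minus[OF subfield] germ_subfield_zero[OF subfield]
    by (simp add: monic_log_relation_def germ_eq_def)
qed

end

locale phi_stable_field = intermediate_field +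
  fixes p :: nat
  assumes p_ge_2: "p \<ge> 2"
    and phi_mem: "\<forall>f\<in>L. phi p f \<in> L"
begin

lemma monic_log_relation_phi:
  assumes "monic_log_relation L n \<mu>"
  shows "monic_log_relation L n (\<lambda>i x. \<mu> i (x ^ p) / of_nat p ^ (n - i))"
  unfolding monic_log_relation_def
proof
  show "\<forall>i<n. (\<lambda>x. \<mu> i (x ^ p) / of_nat p ^ (n - i)) \<in> L"
    using assms phi_mem const_mem germ_subfield_divide[OF subfield]
    by (simp add: monic_log_relation_def phi_def)
  have "filterlim (\<lambda>x::real. x ^ p) at_top at_top"
    using p_ge_2 by (intro filterlim_pow_at_top filterlim_ident) simp
  moreover have "\<forall>\<^sub>F x in at_top. poly_germ \<mu> logfn n x + logfn x ^ n = 0"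
    using assms by (simp add: monic_log_relation_def germ_eq_def)
  ultimately have "\<forall>\<^sub>F x in at_top. poly_germ \<mu> logfn n (x ^ p) + logfn (x ^ p) ^ n = 0"
    using eventually_compose_filterlim by blast
  then show "germ_zero (\<lambda>x. poly_germ (\<lambda>i x. \<mu> i (x ^ p) / of_nat p ^ (n - i)) logfn n x + logfn x ^ n)"
    using eventually_gt_at_top[of 0] unfolding germ_eq_def
  proof eventually_elim
    case (elim x)
    have p: "(of_nat p :: complex) \<noteq> 0"
      using p_ge_2 by simp
    have log_pow: "logfn (x ^ p) = of_nat p * logfn x"
      using elim(2) by (simp add: logfn_def ln_realpow)
    have "\<mu> i (x ^ p) / of_nat p ^ (n - i) * logfn x ^ i = \<mu> i (x ^ p) * logfn (x ^ p) ^ i / of_nat p ^ n"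
      if "i < n" for i
    proof -
      have "(of_nat p :: complex) ^ n = of_nat p ^ i * of_nat p ^ (n - i)"
        using that by (simp add: power_add[symmetric])
      then show ?thesis
        using p by (simp add: log_pow power_mult_distrib field_simps)
    qed
    then have "poly_germ (\<lambda>i x. \<mu> i (x ^ p) / of_nat p ^ (n - i)) logfn n x + logfn x ^ n
        = (poly_germ \<mu> logfn n (x ^ p) + logfn (x ^ p) ^ n) / of_nat p ^ n"
      using p by (simp add: poly_germ_def sum_divide_distrib add_divide_distrib log_pow power_mult_distrib)
    with elim(1) show ?case
      by simp
  qed
qed

text \<open>By uniqueness of the monic relation of least degree, \<mu>_i(z^p) = p^(n-i) \<mu>_i(z), so
  \<mu>_i / (log z)^(n-i) is fixed by phi.\<close>

lemma monic_log_relation_coefficient: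
  assumes "log_powers_independent L n" "monic_log_relation L n \<mu>" "i < n"
  shows "\<exists>c. germ_eq (\<mu> i) (\<lambda>x. c * logfn x ^ (n - i))"
proof -
  define e where "e = (\<lambda>x. \<mu> i x / logfn x ^ (n - i))"
  have "regular_germ (\<mu> i)"
    using assms(2,3) subset_KK' KK'_regular by (auto simp: monic_log_relation_def)
  moreover have "regular_germ (\<lambda>x. logfn x ^ (n - i))"
    unfolding regular_germ_def using has_leading_term_log_power by blast
  ultimately have "regular_germ e"
    unfolding e_def by (rule regular_germ_divide)
  moreover have "germ_eq (phi p e) e"
  proof -
    have "germ_eq (\<mu> i) (\<lambda>x. \<mu> i (x ^ p) / of_nat p ^ (n - i))"
      using monic_log_relation_unique[OF assms(1,2) monic_log_relation_phi[OF assms(2)] assms(3)] .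
    then show ?thesis
      using eventually_gt_at_top[of 0] unfolding germ_eq_def
    proof eventually_elim
      case (elim x)
      then show ?case
        by (simp add: e_def phi_def logfn_def ln_realpow power_mult_distrib)
    qed
  qed
  ultimately obtain c where "germ_eq e (\<lambda>_. c)"
    using regular_germ_phi_invariant_imp_constant p_ge_2 by blast
  then have "germ_eq (\<mu> i) (\<lambda>x. c * logfn x ^ (n - i))"
    using eventually_gt_at_top[of 1] unfolding germ_eq_def
  proof eventually_elim
    case (elim x)
    then have "logfn x \<noteq> 0"
      by (simp add: logfn_def)
    with elim(1) show ?case
      by (simp add: e_def field_simps)
  qed
  then show ?thesis ..
qed

lemma log_power_mem:
  assumes indep: "log_powers_independent L n" and rel: "monic_log_relation L n \<mu>"
  shows "(\<lambda>x. logfn x ^ n) \<in> L"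
proof -
  have "\<exists>i<n. \<not> germ_zero (\<mu> i)"
  proof (rule ccontr)
    assume "\<not> (\<exists>i<n. \<not> germ_zero (\<mu> i))"
    then have "germ_zero (poly_germ \<mu> logfn n)"
      by (simp add: germ_zero_poly_germ)
    moreover have "germ_zero (\<lambda>x. poly_germ \<mu> logfn n x + logfn x ^ n)"
      using rel by (simp add: monic_log_relation_def)
    ultimately have "germ_zero (\<lambda>x. logfn x ^ n)"
      unfolding germ_eq_def by eventually_elim simp
    then show False
      using has_leading_term_not_germ_zero[OF has_leading_term_log_power] by blast
  qed
  then obtain i where i: "i < n" "\<not> germ_zero (\<mu> i)"
    by blast
  then obtain c where c: "germ_eq (\<mu> i) (\<lambda>x. c * logfn x ^ (n - i))"
    using monic_log_relation_coefficient[OF indep rel] by blast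
  with i(2) have "c \<noteq> 0"
    by (auto simp: germ_eq_def)
  with c have "germ_eq (\<lambda>x. \<mu> i x / c) (\<lambda>x. logfn x ^ (n - i))"
    unfolding germ_eq_def by (auto elim: eventually_mono)
  moreover have "(\<lambda>x. \<mu> i x / c) \<in> L"
    using rel i(1) const_mem germ_subfield_divide[OF subfield] by (simp add: monic_log_relation_def)
  ultimately have log_power: "(\<lambda>x. logfn x ^ (n - i)) \<in> L"
    using germ_subfield_cong[OF subfield] by blast
  text \<open>A power of log z of degree below n in L would be a relation of degree below n.\<close>
  have "n - i \<ge> 1"
    using i(1) by simp
  then have "\<not> n - i < n"
    using no_monic_log_relation_if_independent[OF indep] monic_log_relation_log_power[OF _ log_power]
    by blast
  then have "n - i = n"
    by simp
  with log_power show ?thesis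
    by simp
qed

theorem eq_adjoin_log_power: "\<exists>k. L = adjoin KK (\<lambda>x. logfn x ^ k)"
proof (cases "\<exists>n \<mu>. monic_log_relation L n \<mu>")
  case False
  then have "L \<subseteq> adjoin KK (\<lambda>x. logfn x ^ 0)"
    using subset_adjoin_if_independent independent_if_no_monic_log_relation by blast
  moreover have "adjoin KK (\<lambda>x. logfn x ^ 0) \<subseteq> L"
    using adjoin_subset[OF subfield KK_subset] germ_subfield_one[OF subfield] by simp
  ultimately show ?thesis
    by blast
next
  case True
  define n where "n = (LEAST n. \<exists>\<mu>. monic_log_relation L n \<mu>)"
  obtain \<mu> where rel: "monic_log_relation L n \<mu>"
    unfolding n_def using LeastI_ex[OF True] by blast
  have indep: "log_powers_independent L n"
    unfolding n_def by (rule independent_if_no_monic_log_relation) (use not_less_Least in blast)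
  have "n \<noteq> 0"
  proof
    assume "n = 0"
    with rel show False
      by (simp add: monic_log_relation_def poly_germ_def germ_eq_def trivial_limit_at_top_linorder)
  qed
  then have "n \<ge> 1"
    by simp
  have "L = adjoin KK (\<lambda>x. logfn x ^ n)"
    using subset_adjoin_log_power[OF \<open>n \<ge> 1\<close> log_power_mem[OF indep rel] indep]
      adjoin_subset[OF subfield KK_subset log_power_mem[OF indep rel]] by (rule equalityI)
  then show ?thesis ..
qed

end

theorem lemma1p5:
  fixes p :: nat and L :: "(real \<Rightarrow> complex) set"
  assumes "p \<ge> 2"
    and "germ_subfield L"
    and "KK \<subseteq> L" and "L \<subseteq> KK'"
    and "\<forall>f\<in>L. phi p f \<in> L"
    and "\<forall>g\<in>L. \<exists>f\<in>L. germ_eq (phi p f) g"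
  shows "\<exists>k::nat. L = adjoin KK (\<lambda>x. logfn x ^ k)"
proof -
  interpret phi_stable_field L p
    using assms(1-5) by unfold_locales
  show ?thesis
    by (rule eq_adjoin_log_power)
qed

end
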